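(* Let $m,n\ge 3$ be integers. If either ($m\not\equiv 0 \pmod 4$ and $n\neq 4$) or ($n\not\equiv 0\pmod 4$ and $m\neq 4$), then the direct product $C_m\times C_n$ is not a distance magic graph.
   Context: All graphs are finite and simple; $C_n$ denotes the cycle on $n$ vertices. For a graph $G$ and vertex $x$, $N(x)$ is the (open) neighborhood of $x$. A distance magic labeling of a graph $G$ of order $N$ is a bijection $\ell\colon V(G)\to\{1,\dots,N\}$ for which there is a constant $k$ such that $\sum_{y\in N(x)}\ell(y)=k$ for every $x\in V(G)$; $G$ is distance magic if it admits such a labeling. The direct product $G\times H$ has vertex set $V(G)\times V(H)$, with $(g,h)$ adjacent to $(g',h')$ iff $gg'\in E(G)$ and $hh'\in E(H)$. *)

theory Defs
  imports Main
begin

text \<open>A finite simple graph is represented by a vertex set V and a symmetric,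
irreflexive adjacency relation E (only its restriction to V matters).\<close>

definition neighborhood :: "'a set \<Rightarrow> ('a \<Rightarrow> 'a \<Rightarrow> bool) \<Rightarrow> 'a \<Rightarrow> 'a set" where
  "neighborhood V E x = {y \<in> V. E x y}"

definition distance_magic_labeling :: "'a set \<Rightarrow> ('a \<Rightarrow> 'a \<Rightarrow> bool) \<Rightarrow> ('a \<Rightarrow> nat) \<Rightarrow> bool" where
  "distance_magic_labeling V E l \<longleftrightarrow>
     bij_betw l V {1..card V} \<and>
     (\<exists>k. \<forall>x\<in>V. (\<Sum>y\<in>neighborhood V E x. l y) = k)"

definition distance_magic :: "'a set \<Rightarrow> ('a \<Rightarrow> 'a \<Rightarrow> bool) \<Rightarrow> bool" where
  "distance_magic V E \<longleftrightarrow> (\<exists>l. distance_magic_labeling V E l)"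

definition cycle_verts :: "nat \<Rightarrow> nat set" where
  "cycle_verts n = {0..<n}"

definition cycle_adj :: "nat \<Rightarrow> nat \<Rightarrow> nat \<Rightarrow> bool" where
  "cycle_adj n i j \<longleftrightarrow> i \<noteq> j \<and> (j = (i + 1) mod n \<or> i = (j + 1) mod n)"

definition direct_prod_verts :: "'a set \<Rightarrow> 'b set \<Rightarrow> ('a \<times> 'b) set" where
  "direct_prod_verts V W = V \<times> W"

definition direct_prod_adj ::
  "('a \<Rightarrow> 'a \<Rightarrow> bool) \<Rightarrow> ('b \<Rightarrow> 'b \<Rightarrow> bool) \<Rightarrow> ('a \<times> 'b) \<Rightarrow> ('a \<times> 'b) \<Rightarrow> bool" where
  "direct_prod_adj E F p q \<longleftrightarrow> E (fst p) (fst q) \<and> F (snd p) (snd q)"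

end

theory Submission
  imports Defs
begin

(* The direct product C_m x C_n is a torus: vertex (i, j) is adjacent exactly to
   (i +- 1, j +- 1).  Suppose l is a distance magic labeling with constant k and read it
   as a function F on Z x Z, periodic in both coordinates.  Every neighbourhood sum is
   a "four corner" sum, so G x y = F x (y+1) + F x (y-1) satisfies G x y + G (x+2) y = k.
   Iterating this shift by 2 and comparing with the period m, which is odd or twice an
   odd number when 4 does not divide m, forces 2 * G x y = k for all x, y; comparing G at
   y + 1 and y + 3 then gives F x (y+4) = F x y.  Thus l repeats on the vertices (0,0)
   and (0, 4 mod n), which are distinct unless n = 4; the other case is symmetric. *)

definition wrap :: "nat \<Rightarrow> int \<Rightarrow> nat" where
  "wrap m x = nat (x mod int m)"

lemma int_wrap: "m > 0 \<Longrightarrow> int (wrap m x) = x mod int m"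
  by (simp add: wrap_def)

lemma wrap_eq_iff: "m > 0 \<Longrightarrow> wrap m x = wrap m z \<longleftrightarrow> x mod int m = z mod int m"
  by (metis int_wrap of_nat_eq_iff)

lemma wrap_in_cycle_verts: "m > 0 \<Longrightarrow> wrap m x \<in> cycle_verts m"
  by (simp add: wrap_def cycle_verts_def nat_less_iff)

lemma wrap_of_nat: "i \<in> cycle_verts m \<Longrightarrow> wrap m (int i) = i"
  by (simp add: wrap_def cycle_verts_def)

lemma wrap_period: "wrap m (x + int m) = wrap m x"
  by (simp add: wrap_def)

lemma wrap_succ:
  assumes "m > 0" shows "(wrap m x + 1) mod m = wrap m (x + 1)"
proof -
  have "int ((wrap m x + 1) mod m) = (x mod int m + 1) mod int m"
    using assms by (simp add: int_wrap zmod_int add.commute)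
  also have "\<dots> = int (wrap m (x + 1))"
    using assms by (simp add: int_wrap mod_add_left_eq)
  finally show ?thesis by simp
qed

(* Adjacency in C_m (m >= 3) in integer coordinates: z is x + 1 or x - 1 modulo m.
   The length bound excludes loops, which cycle_adj forbids explicitly. *)
lemma cycle_adj_wrap:
  assumes "m \<ge> 3"
  shows "cycle_adj m (wrap m x) (wrap m z) \<longleftrightarrow>
           z mod int m = (x + 1) mod int m \<or> z mod int m = (x - 1) mod int m"
proof -
  have m: "m > 0" using assms by simp
  have no_loop: "(x + 1) mod int m \<noteq> x mod int m" for x
    using assms by (auto simp: mod_eq_dvd_iff dest: zdvd_imp_le)
  have "x mod int m = (z + 1) mod int m \<longleftrightarrow> z mod int m = (x - 1) mod int m"
    by (auto simp: mod_eq_dvd_iff algebra_simps)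
  moreover have "z mod int m = (x + 1) mod int m \<Longrightarrow> x mod int m \<noteq> z mod int m"
    using no_loop[of x] by simp
  moreover have "x mod int m = (z + 1) mod int m \<Longrightarrow> x mod int m \<noteq> z mod int m"
    using no_loop[of z] by simp
  ultimately show ?thesis
    unfolding cycle_adj_def wrap_succ[OF m] wrap_eq_iff[OF m] by blast
qed

lemma cycle_neighborhood:
  assumes "m \<ge> 3"
  shows "neighborhood (cycle_verts m) (cycle_adj m) (wrap m x) = {wrap m (x + 1), wrap m (x - 1)}"
proof -
  have m: "m > 0" using assms by simp
  have "j \<in> neighborhood (cycle_verts m) (cycle_adj m) (wrap m x) \<longleftrightarrow>
        j \<in> {wrap m (x + 1), wrap m (x - 1)}" for j
  proof (cases "j \<in> cycle_verts m")
    case True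
    then have "j = wrap m (int j)" by (simp add: wrap_of_nat)
    then show ?thesis
      using True cycle_adj_wrap[OF assms, of x "int j"] wrap_eq_iff[OF m, of "int j"]
      by (auto simp: neighborhood_def)
  next
    case False
    then show ?thesis using wrap_in_cycle_verts[OF m] by (auto simp: neighborhood_def)
  qed
  then show ?thesis by blast
qed

lemma cycle_neighbors_distinct:
  assumes "m \<ge> 3" shows "wrap m (x + 1) \<noteq> wrap m (x - 1)"
proof -
  have "\<not> int m dvd 2" using assms by (auto dest: zdvd_imp_le)
  then show ?thesis using assms by (simp add: wrap_eq_iff mod_eq_dvd_iff)
qed

lemma direct_prod_neighborhood:
  "neighborhood (direct_prod_verts V W) (direct_prod_adj E F) (a, b) =
     neighborhood V E a \<times> neighborhood W F b"
  by (auto simp: neighborhood_def direct_prod_verts_def direct_prod_adj_def)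

(* Core parity argument: if g (x) + g (x + 2) is constant k, then shifting by 2 t changes g
   into k - g exactly when t is odd.  A period m not divisible by 4 is of the form 2 t or
   2 m with t, m odd, so g = k - g, i.e. 2 g = k everywhere. *)
lemma alternating_periodic_constant:
  fixes g :: "int \<Rightarrow> int"
  assumes m4: "m mod 4 \<noteq> 0"
    and periodic: "\<And>x. g (x + int m) = g x"
    and alternating: "\<And>x. g x + g (x + 2) = k"
  shows "2 * g x = k"
proof -
  have shift_even: "g (x + 2 * int t) = (if even t then g x else k - g x)" for t
  proof (induction t)
    case (Suc t)
    have "g (x + 2 * int (Suc t)) = k - g (x + 2 * int t)"
      using alternating[of "x + 2 * int t"] by (simp add: algebra_simps)
    then show ?case using Suc by auto
  qed simp
  have shift_period: "g (x + int m * int t) = g x" for t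
  proof (induction t)
    case (Suc t)
    then show ?case using periodic[of "x + int m * int t"] by (simp add: algebra_simps)
  qed simp
  show ?thesis
  proof (cases "even m")
    case True
    then obtain t where t: "m = 2 * t" by blast
    with m4 have "odd t" by auto
    then have "g (x + 2 * int t) = k - g x" using shift_even[of t] by simp
    moreover have "g (x + 2 * int t) = g x" using shift_period[of 1] t by simp
    ultimately show ?thesis by simp
  next
    case False
    then have "g (x + 2 * int m) = k - g x" using shift_even[of m] by simp
    moreover have "g (x + 2 * int m) = g x" using shift_period[of 2] by (simp add: mult.commute)
    ultimately show ?thesis by simp
  qed
qed

(* Constant corner sums and a period m with 4 not dividing m force period 4 in the
   other coordinate, via G x y = F x (y + 1) + F x (y - 1), which has constant value k/2. *)
lemma corner_sums_period_four:
  fixes F :: "int \<Rightarrow> int \<Rightarrow> int"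
  assumes m4: "m mod 4 \<noteq> 0"
    and periodic: "\<And>x y. F (x + int m) y = F x y"
    and corners: "\<And>x y. F (x + 1) (y + 1) + F (x + 1) (y - 1) + F (x - 1) (y + 1) + F (x - 1) (y - 1) = k"
  shows "F x (y + 4) = F x y"
proof -
  define G where "G x y = F x (y + 1) + F x (y - 1)" for x y
  have "2 * G x y = k" for x y
  proof (rule alternating_periodic_constant[OF m4, where g = "\<lambda>x. G x y"])
    show "G (x + int m) y = G x y" for x using periodic by (simp add: G_def)
    show "G x y + G (x + 2) y = k" for x
      using corners[of "x + 1" y] by (simp add: G_def algebra_simps)
  qed
  from this[of x "y + 1"] this[of x "y + 3"] show ?thesis
    by (simp add: G_def algebra_simps)
qed

lemma torus_neighborhood_sum:
  fixes f :: "nat \<times> nat \<Rightarrow> 'b :: comm_monoid_add"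
  assumes "m \<ge> 3" "n \<ge> 3"
  shows "(\<Sum>q \<in> neighborhood (direct_prod_verts (cycle_verts m) (cycle_verts n))
                  (direct_prod_adj (cycle_adj m) (cycle_adj n)) (wrap m x, wrap n y). f q) =
         f (wrap m (x + 1), wrap n (y + 1)) + f (wrap m (x + 1), wrap n (y - 1)) +
         f (wrap m (x - 1), wrap n (y + 1)) + f (wrap m (x - 1), wrap n (y - 1))"
  using cycle_neighbors_distinct[OF assms(1), of x] cycle_neighbors_distinct[OF assms(2), of y]
  by (simp add: direct_prod_neighborhood cycle_neighborhood assms sum.cartesian_product[symmetric]
      add.assoc)

lemma wrap_four_eq_wrap_zero:
  assumes "n \<ge> 3" "wrap n 4 = wrap n 0"
  shows "n = 4"
proof -
  have "int n dvd 4" using assms by (simp add: wrap_eq_iff dvd_eq_mod_eq_0)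
  then have "n dvd 4" by presburger
  moreover have "n \<le> 4" using \<open>n dvd 4\<close> by (simp add: dvd_imp_le)
  ultimately show ?thesis using assms(1) by (cases "n = 3") auto
qed

lemma corner_sums_force_four:
  fixes F :: "int \<Rightarrow> int \<Rightarrow> int"
  assumes m4: "m mod 4 \<noteq> 0" and n3: "n \<ge> 3"
    and periodic: "\<And>x y. F (x + int m) y = F x y"
    and corners: "\<And>x y. F (x + 1) (y + 1) + F (x + 1) (y - 1) + F (x - 1) (y + 1) + F (x - 1) (y - 1) = k"
    and separates: "\<And>y y'. F 0 y = F 0 y' \<Longrightarrow> wrap n y = wrap n y'"
  shows "n = 4"
proof -
  have same_label: "F 0 (0 + 4) = F 0 0"
    by (rule corner_sums_period_four[where m = m and F = F and k = k, OF m4 periodic corners])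
  have "wrap n 4 = wrap n 0" using separates[OF same_label] by simp
  then show ?thesis using wrap_four_eq_wrap_zero[OF n3] by blast
qed

lemma distance_magic_torus_corner_sums:
  assumes "m \<ge> 3" "n \<ge> 3"
    and "distance_magic_labeling (direct_prod_verts (cycle_verts m) (cycle_verts n))
           (direct_prod_adj (cycle_adj m) (cycle_adj n)) l"
  obtains k where
    "\<And>x y. int (l (wrap m (x + 1), wrap n (y + 1))) + int (l (wrap m (x + 1), wrap n (y - 1))) +
           int (l (wrap m (x - 1), wrap n (y + 1))) + int (l (wrap m (x - 1), wrap n (y - 1))) = k"
proof -
  let ?V = "direct_prod_verts (cycle_verts m) (cycle_verts n)"
  let ?E = "direct_prod_adj (cycle_adj m) (cycle_adj n)"
  obtain k where magic: "\<forall>p\<in>?V. (\<Sum>q\<in>neighborhood ?V ?E p. l q) = k"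
    using assms(3) unfolding distance_magic_labeling_def by blast
  have neighborhood_sum: "(\<Sum>q\<in>neighborhood ?V ?E (wrap m x, wrap n y). l q) = k" for x y
    using magic assms(1,2) by (simp add: direct_prod_verts_def wrap_in_cycle_verts)
  have "int (l (wrap m (x + 1), wrap n (y + 1))) + int (l (wrap m (x + 1), wrap n (y - 1))) +
      int (l (wrap m (x - 1), wrap n (y + 1))) + int (l (wrap m (x - 1), wrap n (y - 1))) = int k"
    for x y using neighborhood_sum[of x y] unfolding torus_neighborhood_sum[OF assms(1,2)]
    by linarith
  then show ?thesis by (rule that)
qed

theorem mainTheorem9:
  fixes m n :: nat
  assumes "m \<ge> 3" and "n \<ge> 3"
    and "(m mod 4 \<noteq> 0 \<and> n \<noteq> 4) \<or> (n mod 4 \<noteq> 0 \<and> m \<noteq> 4)"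
  shows "\<not> distance_magic
           (direct_prod_verts (cycle_verts m) (cycle_verts n))
           (direct_prod_adj (cycle_adj m) (cycle_adj n))"
proof
  let ?V = "direct_prod_verts (cycle_verts m) (cycle_verts n)"
  let ?E = "direct_prod_adj (cycle_adj m) (cycle_adj n)"
  assume "distance_magic ?V ?E"
  then obtain l where labeling: "distance_magic_labeling ?V ?E l"
    unfolding distance_magic_def by blast
  define F where "F x y = int (l (wrap m x, wrap n y))" for x y
  obtain k where corners:
      "F (x + 1) (y + 1) + F (x + 1) (y - 1) + F (x - 1) (y + 1) + F (x - 1) (y - 1) = k" for x y
    using distance_magic_torus_corner_sums[OF assms(1,2) labeling] unfolding F_def by metis
  have inj: "inj_on l ?V"
    using labeling unfolding distance_magic_labeling_def by (blast dest: bij_betw_imp_inj_on)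
  have separates: "wrap m x = wrap m x' \<and> wrap n y = wrap n y'" if "F x y = F x' y'" for x y x' y'
    using that inj_onD[OF inj, of "(wrap m x, wrap n y)" "(wrap m x', wrap n y')"] assms(1,2)
    by (simp add: F_def direct_prod_verts_def wrap_in_cycle_verts)
  have periodic: "F (x + int m) y = F x y" "F x (y + int n) = F x y" for x y
    by (simp_all add: F_def wrap_period)
  from assms(3) show False
  proof
    assume m_case: "m mod 4 \<noteq> 0 \<and> n \<noteq> 4"
    then have "n = 4"
      using corner_sums_force_four[of m n F k] assms(2) periodic(1) corners separates by blast
    with m_case show False by simp
  next
    assume n_case: "n mod 4 \<noteq> 0 \<and> m \<noteq> 4"
    have transposed_corners:
      "F (y + 1) (x + 1) + F (y - 1) (x + 1) + F (y + 1) (x - 1) + F (y - 1) (x - 1) = k" for x y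
      using corners[of y x] by simp
    from n_case have "m = 4"
      using corner_sums_force_four[of n m "\<lambda>y x. F x y" k] assms(1) periodic(2)
        transposed_corners separates by blast
    with n_case show False by simp
  qed
qed

end
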